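(* Let $\mathcal{A}\subset\mathbb{Z}$ be a finite alphabet, let $G=(V,E)$ be a finite directed graph with edge labelling $\ell:E\to\mathcal{A}$, assume the matrix $M=\sum_{a\in\mathcal{A}}M_a$ is primitive, and let $\beta>1$ be a Pisot number, with $\mathcal{K}^+,\mu^+,\phi^+$ as described in the context. Then the set $\phi^+(\mathcal{K}^+)\subseteq\mathbb{R}$ is either finite or perfect (and thus uncountable). In the first case the measure $(\phi^+)_*(\mu^+)$ is purely atomic; in the second case it is continuous (has no atoms).
   Context: For $a\in\mathcal{A}$, $M_a$ is the $V\times V$ matrix with $(M_a)_{ij}=1$ if $(i,j)\in E$ and $\ell((i,j))=a$, and $0$ otherwise. By Perron–Frobenius, $M$ has a dominant eigenvalue $\lambda>0$ with positive left eigenvector $\mathbf v_L$ and right eigenvector $\mathbf v_R$, normalised by $\mathbf v_L^{\mathsf T}\mathbf v_R=1$. $\mathcal{K}^+\subseteq\mathcal{A}^{\mathbb{N}}$ is the set of sequences $(\ell(e_k))_{k\ge1}$ for infinite paths $e_1e_2\ldots$ in $G$ (terminal vertex of $e_j$ equals initial vertex of $e_{j+1}$). $\mu^+$ is the Borel probability measure on $\mathcal{K}^+$ with $\mu^+([\varepsilon_1,\ldots,\varepsilon_k])=\lambda^{-k}\mathbf v_L^{\mathsf T}M_{\varepsilon_1}\cdots M_{\varepsilon_k}\mathbf v_R$ on cylinder sets $[\varepsilon_1,\ldots,\varepsilon_k]=\{x\in\mathcal{K}^+: x_1=\varepsilon_1,\ldots,x_k=\varepsilon_k\}$. A Pisot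 number is an algebraic integer $>1$ all of whose other Galois conjugates have modulus $<1$ (integers $\ge2$ included). $\phi^+:\mathcal{K}^+\to\mathbb{R}$, $(x_k)\mapsto\sum_{k\ge1}x_k\beta^{-k}$, and $(\phi^+)_*(\mu^+)(A)=\mu^+((\phi^+)^{-1}(A))$. *)

theory Defs
  imports "HOL-Probability.Probability" "HOL-Computational_Algebra.Polynomial_Factorial"
begin

definition label_mat :: "('v::finite \<times> 'v) set \<Rightarrow> ('v \<times> 'v \<Rightarrow> int) \<Rightarrow> int \<Rightarrow> real^'v^'v" where
  "label_mat E l a = (\<chi> i j. if (i, j) \<in> E \<and> l (i, j) = a then 1 else 0)"

definition mat_pow :: "real^'n^'n \<Rightarrow> nat \<Rightarrow> real^'n^'n" where
  "mat_pow A k = ((\<lambda>B. B ** A) ^^ k) (mat 1)"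

definition primitive_mat :: "real^'n^'n \<Rightarrow> bool" where
  "primitive_mat A \<longleftrightarrow> (\<forall>i j. A $ i $ j \<ge> 0) \<and> (\<exists>k>0. \<forall>i j. mat_pow A k $ i $ j > 0)"

definition word_mat :: "('v::finite \<times> 'v) set \<Rightarrow> ('v \<times> 'v \<Rightarrow> int) \<Rightarrow> int list \<Rightarrow> real^'v^'v" where
  "word_mat E l ws = foldr (\<lambda>a B. label_mat E l a ** B) ws (mat 1)"

text \<open>Label sequences of infinite paths; sequences are indexed from 0 (x 0 = x_1).\<close>
definition Kplus :: "('v \<times> 'v) set \<Rightarrow> ('v \<times> 'v \<Rightarrow> int) \<Rightarrow> (nat \<Rightarrow> int) set" where
  "Kplus E l = {x. \<exists>e::nat \<Rightarrow> 'v \<times> 'v. (\<forall>k. e k \<in> E) \<and> (\<forall>k. snd (e k) = fst (e (Suc k)))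
                   \<and> (\<forall>k. x k = l (e k))}"

definition phi_plus :: "real \<Rightarrow> (nat \<Rightarrow> int) \<Rightarrow> real" where
  "phi_plus \<beta> x = (\<Sum>k. real_of_int (x k) / \<beta> ^ Suc k)"

definition pisot :: "real \<Rightarrow> bool" where
  "pisot \<beta> \<longleftrightarrow> \<beta> > 1 \<and> (\<exists>p :: int poly. lead_coeff p = 1 \<and> irreducible p
      \<and> poly (map_poly of_int p) \<beta> = 0
      \<and> (\<forall>z::complex. poly (map_poly of_int p) z = 0 \<and> z \<noteq> complex_of_real \<beta> \<longrightarrow> cmod z < 1))"

definition perfect_set :: "'a::topological_space set \<Rightarrow> bool" where
  "perfect_set S \<longleftrightarrow> closed S \<and> (\<forall>x\<in>S. x islimpt S)"

definition purely_atomic :: "'a measure \<Rightarrow> bool" where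
  "purely_atomic N \<longleftrightarrow> (\<exists>S. countable S \<and> S \<in> sets N \<and> (\<forall>x\<in>S. {x} \<in> sets N)
      \<and> emeasure N (space N - S) = 0)"

definition atomless :: "'a measure \<Rightarrow> bool" where
  "atomless N \<longleftrightarrow> (\<forall>x\<in>space N. {x} \<in> sets N \<and> emeasure N {x} = 0)"

end

theory Submission
  imports Defs
begin

(* phi+(K+) is the union of the pieces K_u = phi+(labels of infinite paths from u), which form
   the attractor of the graph-directed system y -> (l(u,w) + y) / beta.  Expanding by
   y -> beta y - l(u,w) along a path of length n multiplies distances by beta^n, while the
   expansions of points of the pieces stay in a fixed bounded range; so two points that stay
   bounded along a common long path are very close.  By primitivity every piece contains an
   expanded image of every other one, hence either all pieces are finite or all are infinite,
   and in the latter case zooming in and pulling back another point shows that the closed union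
   is perfect.

   For the measure, the fibre over y is covered by the n-cylinders along whose path y stays
   bounded.  Weighted by the Perron eigenvector vR, their normalised mass decreases to a limit
   a(u,y) with lam a(u,y) = sum of a(w, beta y - l(u,w)) over the successors w of u.  Points
   separate along long paths, so a(u,-) sums to at most vR(u) over finite sets; hence if some
   a(u,y) > 0, the ratio a / vR attains its maximum.  A maximal ratio is passed on along every
   edge, which keeps the maximising point bounded along every path from its vertex and forces
   that piece to be a single point.  So all fibres are null when the pieces are infinite. *)

lemma perfect_set_uncountable:
  fixes S :: "'a::{real_normed_vector,heine_borel} set"
  assumes "perfect_set S" and "S \<noteq> {}"
  shows "uncountable S"
proof
  assume "countable S"
  let ?G = "(\<lambda>x. S - {x}) ` S"
  have "S \<subseteq> closure (\<Inter>?G)"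
  proof (rule Baire)
    show "closed S" "countable ?G"
      using assms(1) \<open>countable S\<close> by (simp_all add: perfect_set_def)
    fix T assume "T \<in> ?G"
    then obtain x where "x \<in> S" and T: "T = S \<inter> - {x}" by blast
    have "openin (top_of_set S) T"
      unfolding T by (rule openin_open_Int) auto
    moreover have "S \<subseteq> closure T"
      using assms(1) \<open>x \<in> S\<close> unfolding T perfect_set_def closure_def islimpt_def by auto
    ultimately show "openin (top_of_set S) T \<and> S \<subseteq> closure T" ..
  qed
  moreover have "\<Inter>?G = {}"
    using assms(2) by auto
  ultimately show False
    using assms(2) by simp
qed

lemma sums_div_power_Suc:
  fixes \<beta> :: real
  assumes "\<beta> > 1"
  shows "(\<lambda>k. c / \<beta> ^ Suc k) sums (c / (\<beta> - 1))"
proof -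
  have "norm (inverse \<beta>) < 1"
    using assms by (simp add: inverse_less_1_iff)
  then have "(\<lambda>k. c / \<beta> * inverse \<beta> ^ k) sums (c / \<beta> * (1 / (1 - inverse \<beta>)))"
    by (intro sums_mult geometric_sums)
  moreover have "c / \<beta> * (1 / (1 - inverse \<beta>)) = c / (\<beta> - 1)"
    using assms by (simp add: field_simps)
  moreover have "(\<lambda>k. c / \<beta> * inverse \<beta> ^ k) = (\<lambda>k. c / \<beta> ^ Suc k)"
    by (simp add: power_inverse field_simps)
  ultimately show ?thesis
    by metis
qed

lemma summable_phi_plus:
  fixes \<beta> :: real
  assumes "\<beta> > 1" and "\<And>k. \<bar>real_of_int (x k)\<bar> \<le> c"
  shows "summable (\<lambda>k. real_of_int (x k) / \<beta> ^ Suc k)"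
proof (rule summable_comparison_test')
  show "summable (\<lambda>k. c / \<beta> ^ Suc k)"
    using sums_div_power_Suc[OF assms(1)] by (rule sums_summable)
  show "norm (real_of_int (x k) / \<beta> ^ Suc k) \<le> c / \<beta> ^ Suc k" for k
    using assms by (simp add: abs_divide divide_right_mono)
qed

lemma abs_phi_plus_le:
  assumes "\<beta> > 1" and "\<And>k. \<bar>real_of_int (x k)\<bar> \<le> c"
  shows "\<bar>phi_plus \<beta> x\<bar> \<le> c / (\<beta> - 1)"
proof -
  have "norm (\<Sum>k. real_of_int (x k) / \<beta> ^ Suc k) \<le> (\<Sum>k. c / \<beta> ^ Suc k)"
  proof (rule norm_suminf_le)
    show "norm (real_of_int (x k) / \<beta> ^ Suc k) \<le> c / \<beta> ^ Suc k" for k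
      using assms by (simp add: abs_divide divide_right_mono)
    show "summable (\<lambda>k. c / \<beta> ^ Suc k)"
      using sums_div_power_Suc[OF assms(1)] by (rule sums_summable)
  qed
  then show ?thesis
    using sums_unique[OF sums_div_power_Suc[OF assms(1)]] by (simp add: phi_plus_def)
qed

lemma phi_plus_shift:
  assumes "\<beta> > 1" and "\<And>k. \<bar>real_of_int (x k)\<bar> \<le> c"
  shows "phi_plus \<beta> x = (real_of_int (x 0) + phi_plus \<beta> (\<lambda>k. x (Suc k))) / \<beta>"
proof -
  have "summable (\<lambda>k. real_of_int (x (Suc k)) / \<beta> ^ Suc k)"
    using assms by (intro summable_phi_plus) auto
  then have "(\<Sum>k. real_of_int (x (Suc k)) / \<beta> ^ Suc (Suc k)) = phi_plus \<beta> (\<lambda>k. x (Suc k)) / \<beta>"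
    unfolding phi_plus_def by (subst suminf_divide[symmetric]) (simp_all add: field_simps)
  moreover have "(\<Sum>k. real_of_int (x (Suc k)) / \<beta> ^ Suc (Suc k)) = phi_plus \<beta> x - real_of_int (x 0) / \<beta>"
    using suminf_split_head[OF summable_phi_plus[OF assms]] by (simp add: phi_plus_def)
  ultimately show ?thesis
    using assms(1) by (simp add: field_simps)
qed

lemma phi_plus_eq_if_orbit_bounded:
  assumes "\<beta> > 1"
    and orbit: "\<And>n. y (Suc n) = \<beta> * y n - real_of_int (x n)"
    and bounded: "\<And>n. \<bar>y n\<bar> \<le> B"
  shows "phi_plus \<beta> x = y 0"
proof -
  have partial: "(\<Sum>k<n. real_of_int (x k) / \<beta> ^ Suc k) = y 0 - y n / \<beta> ^ n" for n
  proof (induction n)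
    case (Suc n)
    have "y n / \<beta> ^ n = real_of_int (x n) / \<beta> ^ Suc n + y (Suc n) / \<beta> ^ Suc n"
      using assms(1) by (simp add: orbit field_simps)
    with Suc show ?case by simp
  qed simp
  have "(\<lambda>n. y n / \<beta> ^ n) \<longlonglongrightarrow> 0"
  proof (rule Lim_null_comparison)
    show "\<forall>\<^sub>F n in sequentially. norm (y n / \<beta> ^ n) \<le> B / \<beta> ^ n"
      using assms(1) bounded by (simp add: abs_divide divide_right_mono)
    show "(\<lambda>n. B / \<beta> ^ n) \<longlonglongrightarrow> 0"
      using assms(1) by (rule LIMSEQ_divide_realpow_zero)
  qed
  then have "(\<lambda>n. y 0 - y n / \<beta> ^ n) \<longlonglongrightarrow> y 0 - 0"
    by (intro tendsto_diff tendsto_const)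
  then have "(\<lambda>k. real_of_int (x k) / \<beta> ^ Suc k) sums y 0"
    unfolding sums_def partial by simp
  then show ?thesis
    unfolding phi_plus_def by (rule sums_unique[symmetric])
qed

lemma borel_measurable_phi_plus: "phi_plus \<beta> \<in> borel_measurable (borel :: (nat \<Rightarrow> int) measure)"
proof -
  have "(\<lambda>x::nat \<Rightarrow> int. real_of_int (x k)) \<in> borel_measurable borel" for k
    by (intro borel_measurable_continuous_onI continuous_on_of_int continuous_on_product_coordinates)
  moreover have "phi_plus \<beta> = (\<lambda>x. lim (\<lambda>n. \<Sum>k<n. real_of_int (x k) / \<beta> ^ Suc k))"
    unfolding phi_plus_def suminf_def lim_def sums_def by simp
  ultimately show ?thesis
    by (simp add: borel_measurable_lim_metric)
qed

lemma cylinder_in_borel: "{x :: nat \<Rightarrow> int. \<forall>i<n. x i = w ! i} \<in> sets borel"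
proof -
  have [measurable]: "\<And>i. (\<lambda>x::nat \<Rightarrow> int. x i) \<in> borel_measurable borel"
    by (intro borel_measurable_continuous_onI continuous_on_product_coordinates)
  show ?thesis
    by measurable
qed

lemma purely_atomic_distr_finite_image:
  fixes f :: "'a \<Rightarrow> 'b::t1_space"
  assumes f: "f \<in> borel_measurable M" and A: "A \<in> sets M" "emeasure M (space M - A) = 0"
    and fin: "finite (f ` A)"
  shows "purely_atomic (distr M borel f)"
  unfolding purely_atomic_def
proof (intro exI conjI ballI)
  show "countable (f ` A)"
    using fin by (rule countable_finite)
  show "f ` A \<in> sets (distr M borel f)"
    using fin by (simp add: borel_closed finite_imp_closed)
  show "{y} \<in> sets (distr M borel f)" for y
    by simp
  have "emeasure (distr M borel f) (UNIV - f ` A) = emeasure M (f -` (UNIV - f ` A) \<inter> space M)"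
    using fin by (intro emeasure_distr f) (simp add: borel_closed finite_imp_closed sets.compl_sets)
  also have "\<dots> \<le> emeasure M (space M - A)"
    using A by (intro emeasure_mono) auto
  finally show "emeasure (distr M borel f) (space (distr M borel f) - f ` A) = 0"
    using A by simp
qed

lemma atomless_distr_null_fibres:
  fixes f :: "'a \<Rightarrow> 'b::t1_space"
  assumes f: "f \<in> borel_measurable M" and A: "A \<in> sets M" "emeasure M (space M - A) = 0"
    and null: "\<And>y. emeasure M (f -` {y} \<inter> A) = 0"
  shows "atomless (distr M borel f)"
  unfolding atomless_def
proof (intro ballI conjI)
  fix y
  show "{y} \<in> sets (distr M borel f)"
    by simp
  have "(f -` {y} \<inter> space M) \<inter> A \<in> sets M"
    using f A by (intro sets.Int measurable_sets) auto
  moreover have "(f -` {y} \<inter> space M) \<inter> A = f -` {y} \<inter> A"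
    using sets.sets_into_space[OF A(1)] by blast
  ultimately have fibre: "f -` {y} \<inter> A \<in> sets M"
    by simp
  have "emeasure (distr M borel f) {y} = emeasure M (f -` {y} \<inter> space M)"
    by (simp add: emeasure_distr f)
  also have "\<dots> \<le> emeasure M ((f -` {y} \<inter> A) \<union> (space M - A))"
    by (intro emeasure_mono) (use fibre A in auto)
  also have "\<dots> \<le> emeasure M (f -` {y} \<inter> A) + emeasure M (space M - A)"
    using fibre A by (intro emeasure_subadditive) auto
  finally show "emeasure (distr M borel f) {y} = 0"
    using null A by simp
qed

lemma mat_pow_Suc_left: "mat_pow A (Suc k) = A ** mat_pow A k"
proof (induction k)
  case (Suc k)
  have "mat_pow A (Suc (Suc k)) = (A ** mat_pow A k) ** A"
    using Suc by (simp add: mat_pow_def)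
  then show ?case
    by (simp add: matrix_mul_assoc mat_pow_def)
qed (simp add: mat_pow_def)

locale labelled_graph =
  fixes E :: "('v::finite \<times> 'v) set" and l :: "'v \<times> 'v \<Rightarrow> int"
begin

text \<open>A finite path from \<open>u\<close> is given by the list of vertices visited after \<open>u\<close>.\<close>

fun is_path :: "'v \<Rightarrow> 'v list \<Rightarrow> bool" where
  "is_path u [] \<longleftrightarrow> True"
| "is_path u (w # ws) \<longleftrightarrow> (u, w) \<in> E \<and> is_path w ws"

fun path_end :: "'v \<Rightarrow> 'v list \<Rightarrow> 'v" where
  "path_end u [] = u"
| "path_end u (w # ws) = path_end w ws"

fun path_labels :: "'v \<Rightarrow> 'v list \<Rightarrow> int list" where
  "path_labels u [] = []"
| "path_labels u (w # ws) = l (u, w) # path_labels w ws"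

lemma length_path_labels [simp]: "length (path_labels u ws) = length ws"
  by (induction ws arbitrary: u) auto

definition paths :: "nat \<Rightarrow> 'v \<Rightarrow> 'v list set" where
  "paths n u = {ws. length ws = n \<and> is_path u ws}"

definition walks :: "'v \<Rightarrow> (nat \<Rightarrow> 'v) set" where
  "walks u = {p. p 0 = u \<and> (\<forall>k. (p k, p (Suc k)) \<in> E)}"

definition walk_labels :: "(nat \<Rightarrow> 'v) \<Rightarrow> nat \<Rightarrow> int" where
  "walk_labels p k = l (p k, p (Suc k))"

definition adjacency :: "real^'v^'v" where
  "adjacency = (\<chi> i j. if (i, j) \<in> E then 1 else 0)"

lemma finite_paths: "finite (paths n u)"
  by (rule finite_subset[OF _ finite_lists_length_eq[OF finite_class.finite_UNIV, of n]]) (auto simp: paths_def)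

lemma paths_0 [simp]: "paths 0 u = {[]}"
  by (auto simp: paths_def)

lemma paths_Suc: "paths (Suc n) u = (\<Union>w\<in>{w. (u, w) \<in> E}. (#) w ` paths n w)"
  by (auto simp: paths_def length_Suc_conv)

lemma sum_paths_Suc:
  "(\<Sum>ws\<in>paths (Suc n) u. F ws) = (\<Sum>w\<in>{w. (u, w) \<in> E}. \<Sum>ws\<in>paths n w. F (w # ws))"
  unfolding paths_Suc
  by (subst sum.UNION_disjoint) (auto simp: finite_paths sum.reindex)

lemma word_mat_mult_vec:
  "(word_mat E l wd *v f) $ u
     = (\<Sum>ws\<in>paths (length wd) u. if path_labels u ws = wd then f $ path_end u ws else 0)"
proof (induction wd arbitrary: u)
  case Nil
  then show ?case
    by (simp add: word_mat_def)
next
  case (Cons a wd)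
  have "(word_mat E l (a # wd) *v f) $ u = (label_mat E l a *v (word_mat E l wd *v f)) $ u"
    by (simp add: word_mat_def matrix_vector_mul_assoc)
  also have "\<dots> = (\<Sum>w\<in>UNIV. if (u, w) \<in> E then
      if l (u, w) = a then (word_mat E l wd *v f) $ w else 0 else 0)"
    unfolding matrix_vector_mult_def label_mat_def by (auto intro: sum.cong)
  also have "\<dots> = (\<Sum>w\<in>{w. (u, w) \<in> E}. if l (u, w) = a then (word_mat E l wd *v f) $ w else 0)"
    by (simp add: sum.inter_filter[symmetric])
  also have "\<dots> = (\<Sum>w\<in>{w. (u, w) \<in> E}. \<Sum>ws\<in>paths (length wd) w.
      if path_labels u (w # ws) = a # wd then f $ path_end w ws else 0)"
    by (intro sum.cong refl) (simp add: Cons.IH)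
  also have "\<dots> = (\<Sum>ws\<in>paths (length (a # wd)) u.
      if path_labels u ws = a # wd then f $ path_end u ws else 0)"
    by (simp only: sum_paths_Suc length_Cons path_end.simps)
  finally show ?case .
qed

lemma sum_label_mat_eq_adjacency:
  assumes "finite A" and "\<And>e. e \<in> E \<Longrightarrow> l e \<in> A"
  shows "(\<Sum>a\<in>A. label_mat E l a) = adjacency"
  using assms by (auto simp: vec_eq_iff sum_component label_mat_def adjacency_def sum.delta)

lemma adjacency_eigenvector:
  assumes "adjacency *v v = c *\<^sub>R v"
  shows "(\<Sum>w\<in>{w. (u, w) \<in> E}. v $ w) = c * v $ u"
proof -
  have "(adjacency *v v) $ u = (\<Sum>w\<in>UNIV. if (u, w) \<in> E then v $ w else 0)"
    unfolding matrix_vector_mult_def adjacency_def by (auto intro: sum.cong)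
  also have "\<dots> = (\<Sum>w\<in>{w. (u, w) \<in> E}. v $ w)"
    by (simp add: sum.inter_filter[symmetric])
  finally have "(adjacency *v v) $ u = (\<Sum>w\<in>{w. (u, w) \<in> E}. v $ w)" .
  then show ?thesis
    using assms by simp
qed

lemma mat_pow_adjacency_pos_imp_path:
  "0 < mat_pow adjacency k $ u $ w \<Longrightarrow> \<exists>ws\<in>paths k u. path_end u ws = w"
proof (induction k arbitrary: u)
  case 0
  then show ?case
    by (simp add: mat_pow_def mat_def split: if_splits)
next
  case (Suc k)
  then have "0 < (\<Sum>v\<in>UNIV. adjacency $ u $ v * mat_pow adjacency k $ v $ w)"
    by (simp add: mat_pow_Suc_left matrix_matrix_mult_def)
  then obtain v where "0 < adjacency $ u $ v * mat_pow adjacency k $ v $ w"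
    by (meson not_le sum_nonpos)
  then have "(u, v) \<in> E" and "0 < mat_pow adjacency k $ v $ w"
    by (auto simp: adjacency_def split: if_splits)
  with Suc.IH obtain ws where "ws \<in> paths k v" and "path_end v ws = w"
    by blast
  then show ?case
    using \<open>(u, v) \<in> E\<close> by (intro bexI[of _ "v # ws"]) (auto simp: paths_def)
qed

lemma primitive_adjacency_connected:
  assumes "primitive_mat adjacency"
  obtains ws where "is_path u ws" and "path_end u ws = w"
  using assms mat_pow_adjacency_pos_imp_path unfolding primitive_mat_def paths_def by blast

definition cylinder :: "int list \<Rightarrow> (nat \<Rightarrow> int) set" where
  "cylinder wd = {x \<in> Kplus E l. \<forall>i<length wd. x i = wd ! i}"

lemma Kplus_labels: "x \<in> Kplus E l \<Longrightarrow> x k \<in> l ` E"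
  unfolding Kplus_def by auto

lemma Kplus_eq_walk_labels: "Kplus E l = (\<Union>u. walk_labels ` walks u)"
proof (intro equalityI subsetI)
  fix x assume "x \<in> Kplus E l"
  then obtain e where e: "\<And>k. e k \<in> E" "\<And>k. snd (e k) = fst (e (Suc k))" "\<And>k. x k = l (e k)"
    unfolding Kplus_def by blast
  then have "e k = (fst (e k), fst (e (Suc k)))" for k
    by (metis prod.collapse)
  then have "x = walk_labels (\<lambda>k. fst (e k))" and "(\<lambda>k. fst (e k)) \<in> walks (fst (e 0))"
    using e by (auto simp: walk_labels_def walks_def)
  then show "x \<in> (\<Union>u. walk_labels ` walks u)"
    by blast
next
  fix x assume "x \<in> (\<Union>u. walk_labels ` walks u)"
  then obtain p where "\<And>k. (p k, p (Suc k)) \<in> E" and "x = walk_labels p"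
    by (auto simp: walks_def)
  then show "x \<in> Kplus E l"
    unfolding Kplus_def walk_labels_def by (intro CollectI exI[of _ "\<lambda>k. (p k, p (Suc k))"]) auto
qed

end

locale graph_ifs = labelled_graph E l for E :: "('v::finite \<times> 'v) set" and l +
  fixes \<beta> :: real
  assumes beta_gt_1: "\<beta> > 1"
begin

text \<open>The sets \<open>attractor u\<close> form the attractor of the graph-directed iterated function system
  with maps \<open>z \<mapsto> (l (u, w) + z) / \<beta>\<close> along the edges \<open>(u, w)\<close>; \<open>expand\<close> applies the
  inverse maps along a word.\<close>

fun expand :: "real \<Rightarrow> int list \<Rightarrow> real" where
  "expand y [] = y"
| "expand y (a # as) = expand (\<beta> * y - of_int a) as"

definition label_max :: real where
  "label_max = Max (insert 0 ((\<lambda>e. \<bar>real_of_int (l e)\<bar>) ` E))"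

definition radius :: real where
  "radius = label_max / (\<beta> - 1)"

definition attractor :: "'v \<Rightarrow> real set" where
  "attractor u = (\<lambda>p. phi_plus \<beta> (walk_labels p)) ` walks u"

lemma abs_label_le: "e \<in> E \<Longrightarrow> \<bar>real_of_int (l e)\<bar> \<le> label_max"
  unfolding label_max_def by (rule Max_ge) auto

lemma abs_walk_labels_le: "p \<in> walks u \<Longrightarrow> \<bar>real_of_int (walk_labels p k)\<bar> \<le> label_max"
  unfolding walks_def walk_labels_def by (auto intro: abs_label_le)

lemma radius_fixed_point: "\<beta> * radius - label_max = radius"
  using beta_gt_1 by (simp add: radius_def field_simps)

lemma expand_diff: "expand y as - expand z as = \<beta> ^ length as * (y - z)"
proof (induction as arbitrary: y z)
  case (Cons a as)
  have "expand (\<beta> * y - of_int a) as - expand (\<beta> * z - of_int a) as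
      = \<beta> ^ length as * ((\<beta> * y - of_int a) - (\<beta> * z - of_int a))"
    by (rule Cons.IH)
  then show ?case
    by (simp add: algebra_simps)
qed simp

lemma bounded_expansions_close:
  assumes "\<bar>expand y as\<bar> \<le> radius" and "\<bar>expand z as\<bar> \<le> radius"
  shows "\<bar>y - z\<bar> \<le> 2 * radius / \<beta> ^ length as"
proof -
  have "\<bar>expand y as - expand z as\<bar> \<le> 2 * radius"
    using assms by linarith
  then show ?thesis
    using beta_gt_1 by (simp add: expand_diff abs_mult pos_le_divide_eq mult.commute)
qed

lemma abs_Kplus_le: "x \<in> Kplus E l \<Longrightarrow> \<bar>real_of_int (x k)\<bar> \<le> label_max"
  using Kplus_labels[of x k] abs_label_le by force

lemma expand_phi_plus_prefix:
  assumes "\<And>k. \<bar>real_of_int (x k)\<bar> \<le> c"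
  shows "expand (phi_plus \<beta> x) (map x [0..<n]) = phi_plus \<beta> (\<lambda>k. x (n + k))"
  using assms
proof (induction n arbitrary: x)
  case (Suc n)
  have "\<beta> * phi_plus \<beta> x - x 0 = phi_plus \<beta> (\<lambda>k. x (Suc k))"
    using phi_plus_shift[OF beta_gt_1 Suc.prems] beta_gt_1 by (simp add: field_simps)
  then show ?case
    using Suc.IH[of "\<lambda>k. x (Suc k)"] Suc.prems by (simp del: upt_Suc add: map_upt_Suc)
qed simp

lemma attractor_bound: "y \<in> attractor u \<Longrightarrow> \<bar>y\<bar> \<le> radius"
  unfolding attractor_def radius_def
  using abs_phi_plus_le[OF beta_gt_1 abs_walk_labels_le] by force

lemma attractor_step: "y \<in> attractor u \<longleftrightarrow> (\<exists>w. (u, w) \<in> E \<and> \<beta> * y - l (u, w) \<in> attractor w)"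
proof
  assume "y \<in> attractor u"
  then obtain p where p: "p \<in> walks u" and y: "y = phi_plus \<beta> (walk_labels p)"
    unfolding attractor_def by blast
  have "(\<lambda>k. p (Suc k)) \<in> walks (p 1)" and "(u, p 1) \<in> E"
    using p by (auto simp: walks_def)
  moreover have "\<beta> * y - l (u, p 1) = phi_plus \<beta> (walk_labels (\<lambda>k. p (Suc k)))"
  proof -
    have "walk_labels p 0 = l (u, p 1)" and "(\<lambda>k. walk_labels p (Suc k)) = walk_labels (\<lambda>k. p (Suc k))"
      using p by (auto simp: walk_labels_def walks_def fun_eq_iff)
    then have "y = (l (u, p 1) + phi_plus \<beta> (walk_labels (\<lambda>k. p (Suc k)))) / \<beta>"
      using phi_plus_shift[OF beta_gt_1 abs_walk_labels_le[OF p]] by (simp only: y)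
    then show ?thesis
      using beta_gt_1 by (simp add: field_simps)
  qed
  ultimately show "\<exists>w. (u, w) \<in> E \<and> \<beta> * y - l (u, w) \<in> attractor w"
    unfolding attractor_def by blast
next
  assume "\<exists>w. (u, w) \<in> E \<and> \<beta> * y - l (u, w) \<in> attractor w"
  then obtain w p where w: "(u, w) \<in> E" and p: "p \<in> walks w"
    and z: "\<beta> * y - l (u, w) = phi_plus \<beta> (walk_labels p)"
    unfolding attractor_def by blast
  have p': "case_nat u p \<in> walks u"
    using w p by (auto simp: walks_def split: nat.split)
  have "walk_labels (case_nat u p) 0 = l (u, w)"
    and "(\<lambda>k. walk_labels (case_nat u p) (Suc k)) = walk_labels p"
    using p by (auto simp: walk_labels_def walks_def fun_eq_iff)
  then have "phi_plus \<beta> (walk_labels (case_nat u p)) = (l (u, w) + (\<beta> * y - l (u, w))) / \<beta>"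
    using phi_plus_shift[OF beta_gt_1 abs_walk_labels_le[OF p']] by (simp only: z)
  then have "phi_plus \<beta> (walk_labels (case_nat u p)) = y"
    using beta_gt_1 by simp
  then show "y \<in> attractor u"
    using p' unfolding attractor_def by blast
qed

lemma attractor_expand:
  "y \<in> attractor u \<Longrightarrow> \<exists>ws\<in>paths n u. expand y (path_labels u ws) \<in> attractor (path_end u ws)"
proof (induction n arbitrary: u y)
  case (Suc n)
  then obtain w where "(u, w) \<in> E" and "\<beta> * y - l (u, w) \<in> attractor w"
    using attractor_step by blast
  with Suc.IH obtain ws where "ws \<in> paths n w"
    and "expand (\<beta> * y - l (u, w)) (path_labels w ws) \<in> attractor (path_end w ws)"
    by blast
  then show ?case
    using \<open>(u, w) \<in> E\<close> by (intro bexI[of _ "w # ws"]) (auto simp: paths_def)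
qed simp

lemma attractor_expand_inv:
  "is_path u ws \<Longrightarrow> z \<in> attractor (path_end u ws) \<Longrightarrow> \<exists>y\<in>attractor u. expand y (path_labels u ws) = z"
proof (induction ws arbitrary: u)
  case (Cons w ws)
  then have "(u, w) \<in> E" and "is_path w ws" and "z \<in> attractor (path_end w ws)"
    by simp_all
  with Cons.IH obtain y' where y': "y' \<in> attractor w" "expand y' (path_labels w ws) = z"
    by blast
  define y where "y = (l (u, w) + y') / \<beta>"
  have y_step: "\<beta> * y - l (u, w) = y'"
    using beta_gt_1 by (simp add: y_def)
  then have "y \<in> attractor u"
    using \<open>(u, w) \<in> E\<close> y'(1) by (intro attractor_step[THEN iffD2]) auto
  then show ?case
    using y_step y'(2) by (intro bexI[of _ y]) simp_all
qed simp

text \<open>Following the invariance from a point produces an infinite path along which its expansion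
  stays bounded; the point is then the \<open>\<beta>\<close>-expansion of the labels of that path.\<close>

lemma bounded_invariant_subset_attractor:
  assumes bounded: "\<And>u y. y \<in> S u \<Longrightarrow> \<bar>y\<bar> \<le> B"
    and invariant: "\<And>u y. y \<in> S u \<Longrightarrow> \<exists>w. (u, w) \<in> E \<and> \<beta> * y - l (u, w) \<in> S w"
  shows "S u \<subseteq> attractor u"
proof
  fix y assume "y \<in> S u"
  have "\<forall>v z. \<exists>w. z \<in> S v \<longrightarrow> (v, w) \<in> E \<and> \<beta> * z - l (v, w) \<in> S w"
    using invariant by blast
  then obtain succ where succ: "\<And>v z. z \<in> S v \<Longrightarrow> (v, succ v z) \<in> E \<and> \<beta> * z - l (v, succ v z) \<in> S (succ v z)"
    by metis
  define orbit where "orbit n = ((\<lambda>(v, z). (succ v z, \<beta> * z - l (v, succ v z))) ^^ n) (u, y)" for n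
  define p where "p n = fst (orbit n)" for n
  define z where "z n = snd (orbit n)" for n
  have orbit_0: "p 0 = u" "z 0 = y"
    by (simp_all add: p_def z_def orbit_def)
  have orbit_Suc: "p (Suc n) = succ (p n) (z n)" "z (Suc n) = \<beta> * z n - l (p n, p (Suc n))" for n
    by (simp_all add: p_def z_def orbit_def case_prod_beta)
  have orbit_in_S: "z n \<in> S (p n)" for n
  proof (induction n)
    case 0
    then show ?case
      using \<open>y \<in> S u\<close> by (simp add: orbit_0)
  next
    case (Suc n)
    then show ?case
      using succ[OF Suc.IH] by (simp only: orbit_Suc)
  qed
  have "p \<in> walks u"
    using succ[OF orbit_in_S] by (simp add: walks_def orbit_0 orbit_Suc)
  moreover have "phi_plus \<beta> (walk_labels p) = y"
    using phi_plus_eq_if_orbit_bounded[OF beta_gt_1, of z "walk_labels p" B] bounded[OF orbit_in_S]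
    by (simp add: orbit_0 orbit_Suc(2) walk_labels_def)
  ultimately show "y \<in> attractor u"
    unfolding attractor_def by blast
qed

lemma closed_attractor: "closed (attractor u)"
proof -
  have "closure (attractor u) \<subseteq> attractor u"
  proof (rule bounded_invariant_subset_attractor)
    show "\<bar>y\<bar> \<le> radius" if "y \<in> closure (attractor v)" for v y
    proof -
      have "closure (attractor v) \<subseteq> cball 0 radius"
        using attractor_bound by (intro closure_minimal) auto
      then show ?thesis
        using that by auto
    qed
    show "\<exists>w. (v, w) \<in> E \<and> \<beta> * y - l (v, w) \<in> closure (attractor w)"
      if "y \<in> closure (attractor v)" for v y
    proof -
      let ?T = "\<Union>w\<in>{w. (v, w) \<in> E}. (\<lambda>y. \<beta> * y - l (v, w)) -` closure (attractor w)"
      have "attractor v \<subseteq> ?T"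
      proof
        fix x assume "x \<in> attractor v"
        then obtain w where "(v, w) \<in> E" and "\<beta> * x - l (v, w) \<in> attractor w"
          using attractor_step by blast
        then show "x \<in> ?T"
          using closure_subset by blast
      qed
      moreover have "closed ?T"
        by (intro closed_UN continuous_closed_vimage) (auto intro!: continuous_intros)
      ultimately have "closure (attractor v) \<subseteq> ?T"
        by (rule closure_minimal)
      then show ?thesis
        using that by blast
    qed
  qed
  then show ?thesis
    using closure_subset_eq by blast
qed

lemma phi_plus_Kplus: "phi_plus \<beta> ` Kplus E l = (\<Union>u. attractor u)"
  by (auto simp: Kplus_eq_walk_labels attractor_def)

lemma infinite_attractor_along_path:
  assumes "is_path u ws" and "infinite (attractor (path_end u ws))"
  shows "infinite (attractor u)"
proof
  assume "finite (attractor u)"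
  moreover have "attractor (path_end u ws) \<subseteq> (\<lambda>y. expand y (path_labels u ws)) ` attractor u"
    using attractor_expand_inv[OF assms(1)] by fastforce
  ultimately show False
    using assms(2) finite_surj by blast
qed

lemma perfect_set_Union_attractor:
  assumes "\<And>u. infinite (attractor u)"
  shows "perfect_set (\<Union>u. attractor u)"
  unfolding perfect_set_def
proof (intro conjI ballI)
  show "closed (\<Union>u. attractor u)"
    by (intro closed_Union) (auto simp: closed_attractor)
  fix y assume "y \<in> (\<Union>u. attractor u)"
  then obtain u where y: "y \<in> attractor u"
    by blast
  show "y islimpt (\<Union>u. attractor u)"
  proof (rule islimpt_approachable[THEN iffD2], intro allI impI)
    fix e :: real assume "e > 0"
    obtain n where n: "2 * radius / \<beta> ^ n < e"
      using order_tendstoD(2)[OF LIMSEQ_divide_realpow_zero[OF beta_gt_1] \<open>e > 0\<close>]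
      by (auto simp: eventually_sequentially)
    obtain ws where ws: "ws \<in> paths n u"
      and y_exp: "expand y (path_labels u ws) \<in> attractor (path_end u ws)"
      using attractor_expand[OF y] by blast
    have "\<not> attractor (path_end u ws) \<subseteq> {expand y (path_labels u ws)}"
      using assms[of "path_end u ws"] by (meson finite.emptyI finite_insert finite_subset)
    then obtain z where z: "z \<in> attractor (path_end u ws)" "z \<noteq> expand y (path_labels u ws)"
      by blast
    obtain y' where y': "y' \<in> attractor u" "expand y' (path_labels u ws) = z"
      using attractor_expand_inv[of u ws z] ws z(1) by (auto simp: paths_def)
    have "\<bar>y' - y\<bar> \<le> 2 * radius / \<beta> ^ length (path_labels u ws)"
      using attractor_bound[OF z(1)] attractor_bound[OF y_exp] y'(2)
      by (intro bounded_expansions_close) simp_all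
    then have "dist y' y < e"
      using ws n by (simp add: paths_def dist_real_def)
    moreover have "y' \<noteq> y"
      using y' z by auto
    ultimately show "\<exists>y'\<in>\<Union>u. attractor u. y' \<noteq> y \<and> dist y' y < e"
      using y' by blast
  qed
qed

lemma infinite_attractor_if_connected:
  assumes connected: "\<And>u w. \<exists>ws. is_path u ws \<and> path_end u ws = w"
    and "infinite (phi_plus \<beta> ` Kplus E l)"
  shows "infinite (attractor u)"
proof -
  obtain w where "infinite (attractor w)"
    using assms(2) by (auto simp: phi_plus_Kplus)
  moreover obtain ws where "is_path u ws" and "path_end u ws = w"
    using connected by blast
  ultimately show ?thesis
    using infinite_attractor_along_path by blast
qed

end

locale graph_ifs_eigen = graph_ifs E l \<beta> for E :: "('v::finite \<times> 'v) set" and l \<beta> +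
  fixes vR :: "'v \<Rightarrow> real" and lam :: real
  assumes lam_pos: "lam > 0" and vR_pos: "\<And>u. vR u > 0"
    and eigen: "\<And>u. (\<Sum>w\<in>{w. (u, w) \<in> E}. vR w) = lam * vR u"
begin

lemma sum_paths_eigen: "(\<Sum>ws\<in>paths n u. vR (path_end u ws)) = lam ^ n * vR u"
proof (induction n arbitrary: u)
  case (Suc n)
  then show ?case
    by (simp add: sum_paths_Suc flip: sum_distrib_left) (simp add: eigen)
qed simp

text \<open>Only the cylinders along whose path the expansion of \<open>y\<close> stays within \<open>radius\<close> can
  meet the fibre over \<open>y\<close>.\<close>

definition weight :: "nat \<Rightarrow> 'v \<Rightarrow> real \<Rightarrow> real" where
  "weight n u y = (\<Sum>ws\<in>paths n u.
     if \<bar>expand y (path_labels u ws)\<bar> \<le> radius then vR (path_end u ws) else 0) / lam ^ n"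

lemma weight_nonneg: "0 \<le> weight n u y"
  unfolding weight_def using lam_pos vR_pos by (intro divide_nonneg_pos sum_nonneg) (auto intro: less_imp_le)

lemma weight_le: "weight n u y \<le> vR u"
proof -
  have "weight n u y \<le> (\<Sum>ws\<in>paths n u. vR (path_end u ws)) / lam ^ n"
    unfolding weight_def using lam_pos vR_pos
    by (intro divide_right_mono sum_mono) (auto intro: less_imp_le)
  then show ?thesis
    using lam_pos by (simp add: sum_paths_eigen)
qed

lemma weight_0: "weight 0 u y = (if \<bar>y\<bar> \<le> radius then vR u else 0)"
  by (simp add: weight_def)

lemma weight_Suc: "weight (Suc n) u y = (\<Sum>w\<in>{w. (u, w) \<in> E}. weight n w (\<beta> * y - l (u, w))) / lam"
  using lam_pos by (simp add: weight_def sum_paths_Suc sum_divide_distrib mult.commute cong: if_cong)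

lemma weight_Suc_le: "weight (Suc n) u y \<le> weight n u y"
proof (induction n arbitrary: u y)
  case 0
  show ?case
  proof (cases "\<bar>y\<bar> \<le> radius")
    case True
    have "weight (Suc 0) u y \<le> (\<Sum>w\<in>{w. (u, w) \<in> E}. vR w) / lam"
      unfolding weight_Suc using lam_pos weight_le by (intro divide_right_mono sum_mono) auto
    then show ?thesis
      using True lam_pos by (simp add: weight_0 eigen)
  next
    case False
    have "\<not> \<bar>\<beta> * y - l (u, w)\<bar> \<le> radius" if "(u, w) \<in> E" for w
    proof -
      have "radius = \<beta> * radius - label_max"
        by (simp add: radius_fixed_point)
      also have "\<dots> < \<bar>\<beta> * y\<bar> - \<bar>real_of_int (l (u, w))\<bar>"
      proof -
        have "\<beta> * radius < \<beta> * \<bar>y\<bar>" and "\<bar>\<beta> * y\<bar> = \<beta> * \<bar>y\<bar>"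
          using False beta_gt_1 by (simp_all add: abs_mult)
        then show ?thesis
          using abs_label_le[OF that] by linarith
      qed
      also have "\<dots> \<le> \<bar>\<beta> * y - l (u, w)\<bar>"
        by (rule abs_triangle_ineq2)
      finally show ?thesis
        by simp
    qed
    then show ?thesis
      using False by (simp add: weight_Suc weight_0)
  qed
next
  case (Suc n)
  then show ?case
    using lam_pos by (simp add: weight_Suc[of "Suc n"] weight_Suc[of n] divide_right_mono sum_mono)
qed

definition weight_lim :: "'v \<Rightarrow> real \<Rightarrow> real" where
  "weight_lim u y = lim (\<lambda>n. weight n u y)"

lemma tendsto_weight: "(\<lambda>n. weight n u y) \<longlonglongrightarrow> weight_lim u y"
  and weight_lim_le: "weight_lim u y \<le> weight n u y"
proof -
  have "decseq (\<lambda>n. weight n u y)"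
    by (rule decseq_SucI) (rule weight_Suc_le)
  then obtain L where L: "(\<lambda>n. weight n u y) \<longlonglongrightarrow> L" "\<And>n. L \<le> weight n u y"
    using decseq_convergent[of "\<lambda>n. weight n u y" 0] weight_nonneg by blast
  moreover have "weight_lim u y = L"
    unfolding weight_lim_def using L(1) by (rule limI)
  ultimately show "(\<lambda>n. weight n u y) \<longlonglongrightarrow> weight_lim u y" "weight_lim u y \<le> weight n u y"
    by auto
qed

lemma weight_lim_nonneg: "0 \<le> weight_lim u y"
  using tendsto_weight by (rule LIMSEQ_le_const) (auto intro: weight_nonneg)

lemma weight_lim_rec: "lam * weight_lim u y = (\<Sum>w\<in>{w. (u, w) \<in> E}. weight_lim w (\<beta> * y - l (u, w)))"
proof -
  have "(\<lambda>n. weight (Suc n) u y) \<longlonglongrightarrow> (\<Sum>w\<in>{w. (u, w) \<in> E}. weight_lim w (\<beta> * y - l (u, w))) / lam"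
    unfolding weight_Suc by (intro tendsto_divide tendsto_sum tendsto_weight tendsto_const) (use lam_pos in auto)
  with LIMSEQ_Suc[OF tendsto_weight] have "weight_lim u y = (\<Sum>w\<in>{w. (u, w) \<in> E}. weight_lim w (\<beta> * y - l (u, w))) / lam"
    by (rule LIMSEQ_unique)
  then show ?thesis
    using lam_pos by simp
qed

lemma weight_lim_pos_imp_bounded: "0 < weight_lim u y \<Longrightarrow> \<bar>y\<bar> \<le> radius"
  using weight_lim_le[of u y 0] by (auto simp: weight_0 split: if_splits)

text \<open>For large \<open>n\<close>, each path of length \<open>n\<close> counts towards at most one point of a finite
  set.\<close>

lemma sum_weight_lim_le:
  assumes "finite Y"
  shows "(\<Sum>y\<in>Y. weight_lim u y) \<le> vR u"
proof -
  have "\<forall>\<^sub>F n in sequentially. 2 * radius / \<beta> ^ n < \<bar>y1 - y2\<bar>" if "y1 \<noteq> y2" for y1 y2 :: real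
    using that by (intro order_tendstoD(2)[OF LIMSEQ_divide_realpow_zero[OF beta_gt_1]]) simp
  then have "\<forall>\<^sub>F n in sequentially. \<forall>y1\<in>Y. \<forall>y2\<in>Y - {y1}. 2 * radius / \<beta> ^ n < \<bar>y1 - y2\<bar>"
    using assms by (intro eventually_ball_finite finite_Diff ballI) auto
  then obtain n where n: "\<And>y1 y2. y1 \<in> Y \<Longrightarrow> y2 \<in> Y \<Longrightarrow> y1 \<noteq> y2 \<Longrightarrow> 2 * radius / \<beta> ^ n < \<bar>y1 - y2\<bar>"
    by (auto simp: eventually_sequentially)
  have at_most_one: "(\<Sum>y\<in>Y. if \<bar>expand y (path_labels u ws)\<bar> \<le> radius then vR (path_end u ws) else 0)
      \<le> vR (path_end u ws)" if "ws \<in> paths n u" for ws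
  proof -
    let ?Y = "{y \<in> Y. \<bar>expand y (path_labels u ws)\<bar> \<le> radius}"
    have "y1 = y2" if "y1 \<in> ?Y" "y2 \<in> ?Y" for y1 y2
    proof (rule ccontr)
      assume "y1 \<noteq> y2"
      have "\<bar>y1 - y2\<bar> \<le> 2 * radius / \<beta> ^ length (path_labels u ws)"
        using that by (intro bounded_expansions_close) auto
      then show False
        using n[of y1 y2] that \<open>y1 \<noteq> y2\<close> \<open>ws \<in> paths n u\<close> by (simp add: paths_def)
    qed
    then have "card ?Y \<le> Suc 0"
      using assms by (subst card_le_Suc0_iff_eq) auto
    then show ?thesis
      using assms vR_pos[of "path_end u ws"] by (simp add: sum.If_cases Int_def)
  qed
  have "(\<Sum>y\<in>Y. weight_lim u y) \<le> (\<Sum>y\<in>Y. weight n u y)"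
    by (intro sum_mono weight_lim_le)
  also have "\<dots> = (\<Sum>ws\<in>paths n u. \<Sum>y\<in>Y.
      if \<bar>expand y (path_labels u ws)\<bar> \<le> radius then vR (path_end u ws) else 0) / lam ^ n"
    unfolding weight_def by (simp add: sum_divide_distrib sum.swap[of _ Y])
  also have "\<dots> \<le> (\<Sum>ws\<in>paths n u. vR (path_end u ws)) / lam ^ n"
    using lam_pos by (intro divide_right_mono sum_mono at_most_one) auto
  also have "\<dots> = vR u"
    using lam_pos by (simp add: sum_paths_eigen)
  finally show ?thesis .
qed

lemma finite_weight_lim_ge:
  assumes "c > 0"
  shows "finite {y. c \<le> weight_lim u y}"
proof (rule ccontr)
  assume "infinite {y. c \<le> weight_lim u y}"
  obtain N :: nat where N: "vR u / c < N"
    using reals_Archimedean2 by blast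
  obtain Y where Y: "finite Y" "card Y = N" "Y \<subseteq> {y. c \<le> weight_lim u y}"
    using infinite_arbitrarily_large[OF \<open>infinite _\<close>] by blast
  have "N * c = (\<Sum>y\<in>Y. c)"
    using Y by simp
  also have "\<dots> \<le> (\<Sum>y\<in>Y. weight_lim u y)"
    using Y by (intro sum_mono) auto
  also have "\<dots> \<le> vR u"
    by (rule sum_weight_lim_le[OF Y(1)])
  finally show False
    using N assms by (simp add: field_simps)
qed

lemma finite_weight_lim_ratio_ge:
  assumes "c > 0"
  shows "finite {(u, y). c \<le> weight_lim u y / vR u}"
proof (rule finite_subset)
  show "{(u, y). c \<le> weight_lim u y / vR u} \<subseteq> (\<Union>u. {u} \<times> {y. c * vR u \<le> weight_lim u y})"
    using vR_pos by (auto simp: pos_le_divide_eq)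
  show "finite (\<Union>u. {u} \<times> {y. c * vR u \<le> weight_lim u y})"
    using assms vR_pos by (intro finite_UN_I finite_cartesian_product finite_weight_lim_ge) auto
qed

lemma weight_lim_max_ratio:
  assumes "0 < weight_lim u0 y0"
  obtains s u1 y1 where "s > 0" and "\<And>u y. weight_lim u y \<le> s * vR u" and "weight_lim u1 y1 = s * vR u1"
proof -
  define ratio where "ratio uy = weight_lim (fst uy) (snd uy) / vR (fst uy)" for uy
  define c where "c = ratio (u0, y0)"
  have "c > 0"
    using assms vR_pos by (simp add: c_def ratio_def)
  define S where "S = {(u, y). c \<le> weight_lim u y / vR u}"
  have "finite S"
    unfolding S_def using \<open>c > 0\<close> by (rule finite_weight_lim_ratio_ge)
  have "(u0, y0) \<in> S"
    by (simp add: S_def c_def ratio_def)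
  define s where "s = Max (ratio ` S)"
  have s_ge: "ratio uy \<le> s" for uy
  proof (cases "uy \<in> S")
    case True
    then show ?thesis
      using \<open>finite S\<close> by (simp add: s_def)
  next
    case False
    then have "ratio uy < c"
      by (cases uy) (simp add: S_def ratio_def)
    also have "c \<le> s"
      unfolding s_def c_def using \<open>finite S\<close> \<open>(u0, y0) \<in> S\<close> by (intro Max_ge) auto
    finally show ?thesis
      by simp
  qed
  have "s \<in> ratio ` S"
    unfolding s_def using \<open>finite S\<close> \<open>(u0, y0) \<in> S\<close> by (intro Max_in) auto
  then obtain uy1 where "s = ratio uy1"
    by blast
  show thesis
  proof
    show "s > 0"
      using s_ge[of "(u0, y0)"] \<open>c > 0\<close> by (simp add: c_def)
    show "weight_lim u y \<le> s * vR u" for u y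
      using s_ge[of "(u, y)"] vR_pos[of u] by (simp add: ratio_def pos_divide_le_eq)
    show "weight_lim (fst uy1) (snd uy1) = s * vR (fst uy1)"
      using \<open>s = ratio uy1\<close> vR_pos[of "fst uy1"] by (simp add: ratio_def)
  qed
qed

text \<open>Since \<open>vR\<close> is an eigenvector, the recursion for \<open>weight_lim\<close> averages the ratio
  \<open>weight_lim / vR\<close> over the successors, so a maximal ratio is passed on along every edge.\<close>

lemma weight_lim_max_ratio_propagates:
  assumes max: "\<And>u y. weight_lim u y \<le> s * vR u" and eq: "weight_lim u y = s * vR u"
    and edge: "(u, w) \<in> E"
  shows "weight_lim w (\<beta> * y - l (u, w)) = s * vR w"
proof -
  let ?gap = "\<lambda>w. s * vR w - weight_lim w (\<beta> * y - l (u, w))"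
  have "(\<Sum>w\<in>{w. (u, w) \<in> E}. ?gap w) = s * (lam * vR u) - lam * weight_lim u y"
    by (simp add: sum_subtractf weight_lim_rec flip: sum_distrib_left eigen)
  also have "\<dots> = 0"
    by (simp add: eq)
  finally have "\<forall>w\<in>{w. (u, w) \<in> E}. ?gap w = 0"
    using max by (subst sum_nonneg_eq_0_iff[symmetric]) (auto simp: algebra_simps)
  then show ?thesis
    using edge by simp
qed

lemma expand_bounded_if_max_ratio:
  assumes max: "\<And>u y. weight_lim u y \<le> s * vR u" and "s > 0"
  shows "weight_lim u y = s * vR u \<Longrightarrow> is_path u ws \<Longrightarrow> \<bar>expand y (path_labels u ws)\<bar> \<le> radius"
proof (induction ws arbitrary: u y)
  case Nil
  then show ?case
    using \<open>s > 0\<close> vR_pos[of u] weight_lim_pos_imp_bounded[of u y] by simp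
next
  case (Cons w ws)
  then show ?case
    using weight_lim_max_ratio_propagates[OF max] by simp
qed

lemma attractor_singleton_if_weight_lim_pos:
  assumes "0 < weight_lim u0 y0"
  obtains u y where "attractor u \<subseteq> {y}"
proof -
  obtain s u y where max: "\<And>u y. weight_lim u y \<le> s * vR u" and "s > 0"
    and eq: "weight_lim u y = s * vR u"
    using weight_lim_max_ratio[OF assms] by metis
  have "x = y" if x: "x \<in> attractor u" for x
  proof (rule ccontr)
    assume "x \<noteq> y"
    obtain n where n: "2 * radius / \<beta> ^ n < \<bar>x - y\<bar>"
      using order_tendstoD(2)[OF LIMSEQ_divide_realpow_zero[OF beta_gt_1], of "\<bar>x - y\<bar>"] \<open>x \<noteq> y\<close>
      by (auto simp: eventually_sequentially)
    obtain ws where ws: "ws \<in> paths n u"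
      and "expand x (path_labels u ws) \<in> attractor (path_end u ws)"
      using attractor_expand[OF x] by blast
    then have "\<bar>x - y\<bar> \<le> 2 * radius / \<beta> ^ length (path_labels u ws)"
      using expand_bounded_if_max_ratio[OF max \<open>s > 0\<close> eq]
      by (intro bounded_expansions_close) (auto simp: paths_def dest: attractor_bound)
    then show False
      using n ws by (simp add: paths_def)
  qed
  then show thesis
    using that by blast
qed

lemma weight_lim_eq_0:
  assumes "\<And>u. infinite (attractor u)"
  shows "weight_lim u y = 0"
proof (rule ccontr)
  assume "weight_lim u y \<noteq> 0"
  then have "0 < weight_lim u y"
    using weight_lim_nonneg[of u y] by simp
  then obtain u' y' where "attractor u' \<subseteq> {y'}"
    by (rule attractor_singleton_if_weight_lim_pos)
  then show False
    using assms[of u'] finite_subset by blast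
qed

end

text \<open>In \<open>measure_cylinder\<close>, the matrix product in \<open>vL \<bullet> (M\<^sub>w\<^sub>1 \<cdots> M\<^sub>w\<^sub>k vR)\<close> is expanded as a
  sum over the paths labelled \<open>w\<close> (see \<open>word_mat_mult_vec\<close>).\<close>

locale graph_ifs_measure = graph_ifs_eigen E l \<beta> vR lam + finite_measure \<mu>
  for E :: "('v::finite \<times> 'v) set" and l \<beta> vR lam and \<mu> :: "(nat \<Rightarrow> int) measure" +
  fixes vL :: "'v \<Rightarrow> real"
  assumes sets_\<mu>: "sets \<mu> = sets borel"
    and Kplus_sets: "Kplus E l \<in> sets \<mu>"
    and Kplus_null: "emeasure \<mu> (space \<mu> - Kplus E l) = 0"
    and measure_cylinder: "\<And>wd. measure \<mu> (cylinder wd) = (\<Sum>u\<in>UNIV. vL u *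
      (\<Sum>ws\<in>paths (length wd) u. if path_labels u ws = wd then vR (path_end u ws) else 0)) / lam ^ length wd"
    and vL_nonneg: "\<And>u. 0 \<le> vL u"
    and connected: "\<And>u w. \<exists>ws. is_path u ws \<and> path_end u ws = w"
begin

lemma cylinder_sets: "cylinder wd \<in> sets \<mu>"
  using cylinder_in_borel Kplus_sets by (auto simp: cylinder_def sets_\<mu> Collect_conj_eq)

lemma measurable_phi_plus: "phi_plus \<beta> \<in> borel_measurable \<mu>"
  using borel_measurable_phi_plus measurable_cong_sets[OF sets_\<mu> refl] by blast

lemma measure_fibre_le_weight:
  "measure \<mu> (phi_plus \<beta> -` {y} \<inter> Kplus E l) \<le> (\<Sum>u\<in>UNIV. vL u * weight n u y)"
proof -
  define F where "F = phi_plus \<beta> -` {y} \<inter> Kplus E l"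
  define C where "C = (\<lambda>x. map x [0..<n]) ` F"
  have "finite C"
  proof (rule finite_subset)
    show "C \<subseteq> {wd. set wd \<subseteq> l ` E \<and> length wd = n}"
      by (auto simp: C_def F_def Kplus_labels)
  qed (simp add: finite_lists_length_eq)
  have length_C: "length wd = n" if "wd \<in> C" for wd
    using that by (auto simp: C_def)
  have bounded_C: "\<bar>expand y wd\<bar> \<le> radius" if wd: "wd \<in> C" for wd
  proof -
    obtain x where x: "x \<in> Kplus E l" "phi_plus \<beta> x = y" "wd = map x [0..<n]"
      using wd unfolding C_def F_def by blast
    then show ?thesis
      using expand_phi_plus_prefix[OF abs_Kplus_le[OF x(1)]] abs_phi_plus_le[OF beta_gt_1 abs_Kplus_le[OF x(1)]]
      by (simp flip: x(2) add: x(3) radius_def)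
  qed
  have "measure \<mu> F \<le> measure \<mu> (\<Union>wd\<in>C. cylinder wd)"
    by (intro finite_measure_mono sets.finite_UN \<open>finite C\<close> cylinder_sets)
       (force simp: C_def F_def cylinder_def)
  also have "\<dots> \<le> (\<Sum>wd\<in>C. measure \<mu> (cylinder wd))"
    by (intro measure_UNION_le \<open>finite C\<close> cylinder_sets)
  also have "\<dots> = (\<Sum>u\<in>UNIV. vL u * (\<Sum>ws\<in>paths n u. \<Sum>wd\<in>C.
      if path_labels u ws = wd then vR (path_end u ws) else 0)) / lam ^ n"
    using length_C
    by (simp add: measure_cylinder sum_divide_distrib[symmetric] sum_distrib_left sum.swap[of _ C])
  also have "\<dots> \<le> (\<Sum>u\<in>UNIV. vL u * (\<Sum>ws\<in>paths n u.
      if \<bar>expand y (path_labels u ws)\<bar> \<le> radius then vR (path_end u ws) else 0)) / lam ^ n"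
    using lam_pos vR_pos vL_nonneg bounded_C \<open>finite C\<close>
    by (intro divide_right_mono sum_mono mult_left_mono) (auto simp: sum.delta' less_imp_le)
  also have "\<dots> = (\<Sum>u\<in>UNIV. vL u * weight n u y)"
    by (simp add: weight_def sum_divide_distrib[symmetric])
  finally show ?thesis
    unfolding F_def .
qed

lemma measure_fibre_le_weight_lim:
  "measure \<mu> (phi_plus \<beta> -` {y} \<inter> Kplus E l) \<le> (\<Sum>u\<in>UNIV. vL u * weight_lim u y)"
proof (rule LIMSEQ_le_const)
  show "(\<lambda>n. \<Sum>u\<in>UNIV. vL u * weight n u y) \<longlonglongrightarrow> (\<Sum>u\<in>UNIV. vL u * weight_lim u y)"
    by (intro tendsto_sum tendsto_mult tendsto_const tendsto_weight)
  show "\<exists>N. \<forall>n\<ge>N. measure \<mu> (phi_plus \<beta> -` {y} \<inter> Kplus E l) \<le> (\<Sum>u\<in>UNIV. vL u * weight n u y)"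
    using measure_fibre_le_weight by blast
qed

lemma emeasure_fibre_eq_0:
  assumes "infinite (phi_plus \<beta> ` Kplus E l)"
  shows "emeasure \<mu> (phi_plus \<beta> -` {y} \<inter> Kplus E l) = 0"
proof -
  have "weight_lim u y = 0" for u
    using assms connected by (intro weight_lim_eq_0 infinite_attractor_if_connected)
  then have "measure \<mu> (phi_plus \<beta> -` {y} \<inter> Kplus E l) \<le> 0"
    using measure_fibre_le_weight_lim[of y] by simp
  then show ?thesis
    by (simp add: emeasure_eq_measure measure_le_0_iff)
qed

lemma finite_or_perfect:
  "(finite (phi_plus \<beta> ` Kplus E l) \<and> purely_atomic (distr \<mu> borel (phi_plus \<beta>)))
   \<or> (perfect_set (phi_plus \<beta> ` Kplus E l) \<and> uncountable (phi_plus \<beta> ` Kplus E l)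
      \<and> atomless (distr \<mu> borel (phi_plus \<beta>)))"
proof (cases "finite (phi_plus \<beta> ` Kplus E l)")
  case True
  then show ?thesis
    using purely_atomic_distr_finite_image[OF measurable_phi_plus Kplus_sets Kplus_null] by blast
next
  case False
  have "atomless (distr \<mu> borel (phi_plus \<beta>))"
    using False by (intro atomless_distr_null_fibres[OF measurable_phi_plus Kplus_sets Kplus_null] emeasure_fibre_eq_0)
  moreover have "perfect_set (phi_plus \<beta> ` Kplus E l)"
    unfolding phi_plus_Kplus using False connected
    by (intro perfect_set_Union_attractor infinite_attractor_if_connected) auto
  moreover have "phi_plus \<beta> ` Kplus E l \<noteq> {}"
    using False by auto
  ultimately show ?thesis
    using perfect_set_uncountable by blast
qed

end

theorem theorem6:
  fixes A :: "int set" and E :: "('v::finite \<times> 'v) set" and l :: "'v \<times> 'v \<Rightarrow> int"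
    and \<beta> lam :: real and vL vR :: "real^'v" and \<mu> :: "(nat \<Rightarrow> int) measure"
  assumes A_fin: "finite A"
    and lab: "\<And>e. e \<in> E \<Longrightarrow> l e \<in> A"
    and prim: "primitive_mat (\<Sum>a\<in>A. label_mat E l a)"
    and eig_pos: "lam > 0"
    and vL_pos: "\<And>i. vL $ i > 0" and vR_pos: "\<And>i. vR $ i > 0"
    and vL_eig: "vL v* (\<Sum>a\<in>A. label_mat E l a) = lam *\<^sub>R vL"
    and vR_eig: "(\<Sum>a\<in>A. label_mat E l a) *v vR = lam *\<^sub>R vR"
    and norm: "vL \<bullet> vR = 1"
    and pis: "pisot \<beta>"
    and prob: "prob_space \<mu>"
    and sets_mu: "sets \<mu> = sets (borel :: (nat \<Rightarrow> int) measure)"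
    and supp: "emeasure \<mu> (Kplus E l) = 1"
    and cyl: "\<And>ws. measure \<mu> {x \<in> Kplus E l. \<forall>i<length ws. x i = ws ! i}
                 = (vL \<bullet> (word_mat E l ws *v vR)) / lam ^ length ws"
  shows "(finite (phi_plus \<beta> ` Kplus E l) \<and> purely_atomic (distr \<mu> borel (phi_plus \<beta>)))
       \<or> (perfect_set (phi_plus \<beta> ` Kplus E l) \<and> uncountable (phi_plus \<beta> ` Kplus E l)
          \<and> atomless (distr \<mu> borel (phi_plus \<beta>)))"
proof -
  interpret prob_space \<mu>
    by (rule prob)
  interpret graph: labelled_graph E l .
  have adjacency: "(\<Sum>a\<in>A. label_mat E l a) = graph.adjacency"
    using A_fin lab by (rule graph.sum_label_mat_eq_adjacency)
  interpret graph_ifs_measure E l \<beta> "\<lambda>u. vR $ u" lam \<mu> "\<lambda>u. vL $ u"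
  proof
    show "\<beta> > 1"
      using pis by (simp add: pisot_def)
    show "lam > 0" "vR $ u > 0" "0 \<le> vL $ u" for u
      using eig_pos vR_pos[of u] vL_pos[of u] by simp_all
    show "(\<Sum>w\<in>{w. (u, w) \<in> E}. vR $ w) = lam * vR $ u" for u
      using vR_eig[unfolded adjacency] by (rule graph.adjacency_eigenvector)
    show "sets \<mu> = sets borel"
      by (rule sets_mu)
    show Kplus_sets: "Kplus E l \<in> sets \<mu>"
      using supp emeasure_notin_sets by fastforce
    show "emeasure \<mu> (space \<mu> - Kplus E l) = 0"
      using emeasure_compl[OF Kplus_sets] supp emeasure_space_1 by simp
    show "measure \<mu> (graph.cylinder wd) = (\<Sum>u\<in>UNIV. vL $ u * (\<Sum>ws\<in>graph.paths (length wd) u.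
        if graph.path_labels u ws = wd then vR $ graph.path_end u ws else 0)) / lam ^ length wd" for wd
      by (simp add: graph.cylinder_def cyl inner_vec_def graph.word_mat_mult_vec)
    show "\<exists>ws. graph.is_path u ws \<and> graph.path_end u ws = w" for u w
      by (rule graph.primitive_adjacency_connected[OF prim[unfolded adjacency]]) blast
  qed
  show ?thesis
    by (rule finite_or_perfect)
qed

end
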